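(* Let $T$ and $T'$ be DFS trees of size $n$. Assume that for every $x_i\in\{x_2,\dots,x_n\}$, if $T_{x_i}=T'_{x_i}$ then $x_i$ has the same parent in $T$ and in $T'$. Then $T=T'$.
   Context: A DFS tree of size $n$ is a rooted tree on the vertex set $\{x_1,\dots,x_n\}$ with root $x_1$ and edges directed away from the root, in which $x_1,\dots,x_n$ is the preorder (depth-first search) order, children visited in increasing order of index. For a vertex $x$, $T_x$ denotes the rooted induced subtree consisting of $x$ and all its descendants; $T_x=T'_x$ means equal vertex and edge sets. *)

theory Defs
  imports Main
begin

text \<open>Vertices x_1,...,x_n are represented by the natural numbers 1,...,n.
A directed tree is given by its edge set E (pairs (parent, child)).\<close>

definition children :: "(nat \<times> nat) set \<Rightarrow> nat \<Rightarrow> nat list" where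
  "children E v = sorted_list_of_set {w. (v, w) \<in> E}"

text \<open>preord E v L: L is the preorder (DFS order, children visited in
increasing order of index) of the subtree rooted at v.\<close>
inductive preord :: "(nat \<times> nat) set \<Rightarrow> nat \<Rightarrow> nat list \<Rightarrow> bool" for E where
  "list_all2 (preord E) (children E v) Ls \<Longrightarrow> preord E v (v # concat Ls)"

definition rooted_tree :: "nat set \<Rightarrow> nat \<Rightarrow> (nat \<times> nat) set \<Rightarrow> bool" where
  "rooted_tree V r E \<longleftrightarrow> r \<in> V \<and> E \<subseteq> V \<times> V
     \<and> (\<forall>u. (u, r) \<notin> E)
     \<and> (\<forall>v \<in> V - {r}. \<exists>!u. (u, v) \<in> E)
     \<and> (\<forall>v \<in> V. (r, v) \<in> E\<^sup>*)"

definition dfs_tree :: "nat \<Rightarrow> (nat \<times> nat) set \<Rightarrow> bool" where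
  "dfs_tree n E \<longleftrightarrow> rooted_tree {1..n} 1 E \<and> preord E 1 [1..<n+1]"

definition subtree_verts :: "(nat \<times> nat) set \<Rightarrow> nat \<Rightarrow> nat set" where
  "subtree_verts E x = {y. (x, y) \<in> E\<^sup>*}"

definition subtree_edges :: "(nat \<times> nat) set \<Rightarrow> nat \<Rightarrow> (nat \<times> nat) set" where
  "subtree_edges E x = E \<inter> (subtree_verts E x \<times> subtree_verts E x)"

definition same_subtree :: "(nat \<times> nat) set \<Rightarrow> (nat \<times> nat) set \<Rightarrow> nat \<Rightarrow> bool" where
  "same_subtree E E' x \<longleftrightarrow> subtree_verts E x = subtree_verts E' x
     \<and> subtree_edges E x = subtree_edges E' x"

definition same_parent :: "(nat \<times> nat) set \<Rightarrow> (nat \<times> nat) set \<Rightarrow> nat \<Rightarrow> bool" where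
  "same_parent E E' x \<longleftrightarrow> (\<forall>u. (u, x) \<in> E \<longleftrightarrow> (u, x) \<in> E')"

end

theory Submission
  imports Defs "HOL-Library.Sublist"
begin

text \<open>In a DFS tree every edge points from a smaller to a larger index, because the preorder
of the subtree at u is a contiguous block of the sorted list [1..<n+1] starting with u and
containing all children of u. Hence T_i is determined by the edges entering vertices larger
than i. If T and T' differ, take the largest vertex v whose parents differ: all edges entering
vertices above v agree, so T_v = T'_v, and the hypothesis forces v to have the same parent
after all.\<close>

lemma set_children:
  assumes "finite E"
  shows "set (children E v) = {w. (v, w) \<in> E}"
proof -
  have "{w. (v, w) \<in> E} \<subseteq> snd ` E" by force
  then have "finite {w. (v, w) \<in> E}"
    using assms finite_subset by blast
  then show ?thesis
    unfolding children_def by simp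
qed

lemma list_all2_obtain_right:
  assumes "list_all2 P xs ys" "x \<in> set xs"
  obtains y where "y \<in> set ys" "P x y"
  using assms by (induction rule: list_all2_induct) auto

lemma preord_imp_Cons:
  assumes "preord E v L"
  obtains r where "L = v # r"
  using assms by (cases rule: preord.cases) auto

lemma preord_child:
  assumes "preord E u L" "finite E" "(u, v) \<in> E"
  obtains r where "L = u # r" "v \<in> set r"
  using assms(1)
proof (cases rule: preord.cases)
  case (1 Ls)
  have "v \<in> set (children E u)"
    using set_children[OF assms(2)] assms(3) by auto
  then obtain Lv where "Lv \<in> set Ls" "preord E v Lv"
    using list_all2_obtain_right[OF \<open>list_all2 (preord E) (children E u) Ls\<close>] by blast
  moreover from \<open>preord E v Lv\<close> have "v \<in> set Lv"
    by (auto elim: preord_imp_Cons)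
  ultimately have "v \<in> set (concat Ls)" by auto
  with \<open>L = u # concat Ls\<close> show thesis using that by blast
qed

lemma preord_descendant_sublist:
  assumes "preord E w L" "finite E" "(w, u) \<in> E\<^sup>*"
  shows "\<exists>Lu. preord E u Lu \<and> sublist Lu L"
  using assms(1,3)
proof (induction arbitrary: u rule: preord.induct)
  case (1 v Ls)
  show ?case
  proof (cases "u = v")
    case True
    have "list_all2 (preord E) (children E v) Ls"
      using "1.IH" by (rule list_all2_mono) simp
    then have "preord E v (v # concat Ls)" by (rule preord.intros)
    with True show ?thesis by blast
  next
    case False
    then obtain c where c: "(v, c) \<in> E" "(c, u) \<in> E\<^sup>*"
      using "1.prems" by (metis converse_rtranclE)
    have "c \<in> set (children E v)"
      using set_children[OF assms(2)] c(1) by auto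
    then obtain Lc where "Lc \<in> set Ls" and
      IH: "\<And>u. (c, u) \<in> E\<^sup>* \<Longrightarrow> \<exists>Lu. preord E u Lu \<and> sublist Lu Lc"
      using list_all2_obtain_right[OF "1.IH"] by blast
    obtain Lu where Lu: "preord E u Lu" "sublist Lu Lc"
      using IH[OF c(2)] by blast
    from \<open>Lc \<in> set Ls\<close> obtain Ls1 Ls2 where "Ls = Ls1 @ Lc # Ls2"
      by (metis split_list)
    then have "v # concat Ls = (v # concat Ls1) @ Lc @ concat Ls2" by simp
    then have "sublist Lc (v # concat Ls)" by (metis sublist_appendI)
    with Lu show ?thesis
      using sublist_order.order.trans by blast
  qed
qed

lemma preord_sorted_wrt_edge:
  assumes "preord E w L" "sorted_wrt R L" "finite E" "(w, u) \<in> E\<^sup>*" "(u, v) \<in> E"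
  shows "R u v"
proof -
  obtain Lu where "preord E u Lu" "sublist Lu L"
    using preord_descendant_sublist[OF assms(1,3,4)] by blast
  then obtain r where "Lu = u # r" "v \<in> set r"
    using preord_child[OF _ assms(3,5)] by blast
  moreover have "sorted_wrt R Lu"
    using \<open>sublist Lu L\<close> assms(2) by (auto simp: sublist_def sorted_wrt_append)
  ultimately show ?thesis by simp
qed

lemma dfs_tree_finite:
  assumes "dfs_tree n E"
  shows "finite E"
  using assms finite_subset[of E "{1..n} \<times> {1..n}"]
  by (auto simp: dfs_tree_def rooted_tree_def)

lemma dfs_tree_edge_target:
  assumes "dfs_tree n E" "(u, v) \<in> E"
  shows "v \<in> {2..n}"
proof -
  have "v \<in> {1..n}" "v \<noteq> 1"
    using assms by (auto simp: dfs_tree_def rooted_tree_def)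
  then show ?thesis by auto
qed

lemma dfs_tree_edge_less:
  assumes "dfs_tree n E" "(u, v) \<in> E"
  shows "u < v"
proof -
  have "preord E 1 [1..<n+1]" "(1, u) \<in> E\<^sup>*"
    using assms by (auto simp: dfs_tree_def rooted_tree_def)
  then show ?thesis
    using preord_sorted_wrt_edge sorted_wrt_upt dfs_tree_finite[OF assms(1)] assms(2) by blast
qed

lemma rtrancl_increasing_le:
  fixes E :: "'a::preorder rel"
  assumes "\<forall>(u, v) \<in> E. u < v" "(x, y) \<in> E\<^sup>*"
  shows "x \<le> y"
  using assms(2)
proof (induction rule: rtrancl_induct)
  case base
  then show ?case by simp
next
  case (step y z)
  with assms(1) have "y < z" by blast
  with step.IH show ?case by (meson order.strict_implies_order order_trans)
qed

lemma rtrancl_increasing_transfer: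
  fixes E E' :: "'a::preorder rel"
  assumes "\<forall>(u, v) \<in> E. u < v" "\<forall>(u, v) \<in> E. x < v \<longrightarrow> (u, v) \<in> E'" "(x, y) \<in> E\<^sup>*"
  shows "(x, y) \<in> E'\<^sup>*"
  using assms(3)
proof (induction rule: rtrancl_induct)
  case base
  then show ?case by simp
next
  case (step y z)
  from assms(1) step.hyps(2) have "y < z" by blast
  with rtrancl_increasing_le[OF assms(1) step.hyps(1)] have "x < z"
    by (rule order_le_less_trans)
  with assms(2) step.hyps(2) have "(y, z) \<in> E'" by blast
  with step.IH show ?case by (rule rtrancl_into_rtrancl)
qed

lemma same_subtree_if_same_parent_above:
  assumes incr: "\<forall>(u, v) \<in> E. u < v" "\<forall>(u, v) \<in> E'. u < v"
    and "\<forall>v > i. same_parent E E' v"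
  shows "same_subtree E E' i"
proof -
  have agree: "(u, v) \<in> E \<longleftrightarrow> (u, v) \<in> E'" if "i < v" for u v
    using assms(3) that unfolding same_parent_def by blast
  have "\<forall>(u, v) \<in> E. i < v \<longrightarrow> (u, v) \<in> E'" "\<forall>(u, v) \<in> E'. i < v \<longrightarrow> (u, v) \<in> E"
    using agree by auto
  then have verts: "subtree_verts E i = subtree_verts E' i"
    unfolding subtree_verts_def
    using rtrancl_increasing_transfer[OF incr(1)] rtrancl_increasing_transfer[OF incr(2)] by auto
  have "(u, v) \<in> E \<longleftrightarrow> (u, v) \<in> E'" if "u \<in> subtree_verts E i" for u v
  proof -
    from that have "i \<le> u"
      unfolding subtree_verts_def by (auto intro: rtrancl_increasing_le[OF incr(1)])
    moreover have "u < v" if "(u, v) \<in> E \<union> E'"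
      using incr that by blast
    ultimately show ?thesis
      using agree by (meson Un_iff order_le_less_trans)
  qed
  then show ?thesis
    unfolding same_subtree_def subtree_edges_def using verts by blast
qed

lemma increasing_trees_eq_if_local_agreement:
  fixes E E' :: "(nat \<times> nat) set"
  assumes "finite E" "finite E'" "\<forall>(u, v) \<in> E. u < v" "\<forall>(u, v) \<in> E'. u < v"
    and "\<forall>i. same_subtree E E' i \<longrightarrow> same_parent E E' i"
  shows "E = E'"
proof -
  obtain N where N: "\<forall>v \<in> snd ` (E \<union> E'). v \<le> N"
    using assms(1,2) finite_nat_set_iff_bounded_le by (metis finite_Un finite_imageI)
  have "\<forall>v \<ge> i. same_parent E E' v" if "i \<le> Suc N" for i
    using that
  proof (induction rule: inc_induct)
    case base
    show ?case using N by (force simp: same_parent_def)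
  next
    case (step i)
    then have "same_subtree E E' i"
      using same_subtree_if_same_parent_above[OF assms(3,4)] by (simp add: Suc_le_eq)
    with step.IH assms(5) show ?case by (metis le_antisym not_less_eq_eq)
  qed
  then show ?thesis
    by (force simp: same_parent_def)
qed

theorem lemma6p13:
  fixes n :: nat and E E' :: "(nat \<times> nat) set"
  assumes "dfs_tree n E" and "dfs_tree n E'"
    and "\<forall>i \<in> {2..n}. same_subtree E E' i \<longrightarrow> same_parent E E' i"
  shows "E = E'"
proof (rule increasing_trees_eq_if_local_agreement)
  show "finite E" "finite E'"
    using assms(1,2) dfs_tree_finite by blast+
  show "\<forall>(u, v) \<in> E. u < v" "\<forall>(u, v) \<in> E'. u < v"
    using assms(1,2) dfs_tree_edge_less by blast+
  have "same_parent E E' i" if "i \<notin> {2..n}" for i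
    using that dfs_tree_edge_target[OF assms(1)] dfs_tree_edge_target[OF assms(2)]
    by (auto simp: same_parent_def)
  with assms(3) show "\<forall>i. same_subtree E E' i \<longrightarrow> same_parent E E' i" by blast
qed

end
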